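(* For every integer $n\ge 1$ and every integer $k$ with $0\le k\le 2^{n}-2$, $$B_{k+1}(t)B_{2^{n}-k}(t)-B_{k}(t)B_{2^{n}-k-1}(t)=t^{n}.$$
   Context: The Stern polynomials $B_n(t)\in\mathbb{Z}[t]$, $n\ge 0$, are defined by $B_0(t)=0$, $B_1(t)=1$, $B_{2n}(t)=tB_n(t)$ and $B_{2n+1}(t)=B_n(t)+B_{n+1}(t)$ for $n\ge 1$. *)

theory Defs
  imports "HOL-Computational_Algebra.Polynomial"
begin

function stern :: "nat \<Rightarrow> int poly" where
  "stern n = (if n = 0 then 0 else if n = 1 then 1
     else if even n then [:0, 1:] * stern (n div 2)
     else stern (n div 2) + stern (n div 2 + 1))"
  by auto
termination
  by (relation "measure id") (auto elim: oddE)

declare stern.simps [simp del]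

lemma stern_0: "stern 0 = 0" by (simp add: stern.simps)
lemma stern_1: "stern 1 = 1" by (simp add: stern.simps)
lemma stern_even: "n \<ge> 1 \<Longrightarrow> stern (2 * n) = [:0, 1:] * stern n"
  by (subst stern.simps) auto
lemma stern_odd: "n \<ge> 1 \<Longrightarrow> stern (2 * n + 1) = stern n + stern (n + 1)"
  by (subst stern.simps) auto

end

theory Submission
  imports Defs
begin

(* Write t = [:0, 1:] and D(k, m) = B_(k+1) B_(m+1) - B_k B_m for the 2x2
   "Stern determinant" of two consecutive pairs.  The theorem is the case
   m = 2^n - k - 1 of the identity

       D(k, m) = t^n     whenever k + m + 1 = 2^n,

   proved by induction on n.  If k + m + 1 = 2^(n+1), then k and m have
   opposite parities; writing them as 2j, 2i+1 (or the reverse, which is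
   covered by the symmetry D(k, m) = D(m, k)), the recurrences of the Stern
   polynomials give D(2j, 2i+1) = t * D(j, i) with j + i + 1 = 2^n. *)

lemma stern_double: "stern (2 * j) = [:0, 1:] * stern j"
  by (cases "j = 0") (auto simp: stern_0 stern_even)

lemma stern_double_Suc: "stern (2 * j + 1) = stern j + stern (j + 1)"
  using stern_odd[of j] by (cases "j = 0") (auto simp: stern_0 stern_1)

definition stern_det :: "nat \<Rightarrow> nat \<Rightarrow> int poly" where
  "stern_det k m = stern (k + 1) * stern (m + 1) - stern k * stern m"

lemma stern_det_sym: "stern_det k m = stern_det m k"
  by (simp add: stern_det_def mult.commute)

lemma stern_det_double: "stern_det (2 * j) (2 * i + 1) = [:0, 1:] * stern_det j i"
proof -
  have "stern_det (2 * j) (2 * i + 1)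
      = stern (2 * j + 1) * stern (2 * (i + 1)) - stern (2 * j) * stern (2 * i + 1)"
    unfolding stern_det_def by (simp add: algebra_simps)
  also have "\<dots> = (stern j + stern (j + 1)) * ([:0, 1:] * stern (i + 1))
        - [:0, 1:] * stern j * (stern i + stern (i + 1))"
    unfolding stern_double stern_double_Suc ..
  also have "\<dots> = [:0, 1:] * (stern (j + 1) * stern (i + 1) - stern j * stern i)"
    by (simp add: algebra_simps)
  finally show ?thesis
    unfolding stern_det_def .
qed

lemma stern_det_complementary:
  "k + m + 1 = 2 ^ n \<Longrightarrow> stern_det k m = [:0, 1:] ^ n"
proof (induction n arbitrary: k m)
  case 0
  then have "k = 0" "m = 0" by simp_all
  then show ?case unfolding stern_det_def by (simp add: stern_0 stern_1[unfolded One_nat_def])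
next
  case (Suc n)
  have halving: "stern_det (2 * j) (2 * i + 1) = [:0, 1:] ^ Suc n"
    if "2 * j + (2 * i + 1) + 1 = 2 ^ Suc n" for j i
  proof -
    from that have "j + i + 1 = 2 ^ n" by simp
    then have "stern_det j i = [:0, 1:] ^ n" by (rule Suc.IH)
    then show ?thesis unfolding stern_det_double by simp
  qed
  have "even (k + m + 1)"
    unfolding Suc.prems by simp
  then have parity: "even k \<longleftrightarrow> odd m" by simp
  show ?case
  proof (cases "even k")
    case True
    then obtain j where k: "k = 2 * j" by (rule evenE)
    from True parity have "odd m" by simp
    then obtain i where m: "m = 2 * i + 1" by (rule oddE)
    from Suc.prems have "2 * j + (2 * i + 1) + 1 = 2 ^ Suc n" unfolding k m .
    then show ?thesis unfolding k m by (rule halving)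
  next
    case False
    then obtain j where k: "k = 2 * j + 1" by (rule oddE)
    from False parity have "even m" by simp
    then obtain i where m: "m = 2 * i" by (rule evenE)
    from Suc.prems have "2 * i + (2 * j + 1) + 1 = 2 ^ Suc n" unfolding k m by simp
    then show ?thesis unfolding k m stern_det_sym[of "2 * j + 1"] by (rule halving)
  qed
qed

theorem theorem2p5:
  fixes n k :: nat
  assumes "n \<ge> 1" and "k \<le> 2 ^ n - 2"
  shows "stern (k + 1) * stern (2 ^ n - k) - stern k * stern (2 ^ n - k - 1) = [:0, 1:] ^ n"
proof -
  have "(2::nat) ^ n \<ge> 2"
    using assms(1) by (metis one_le_numeral power_increasing power_one_right)
  then have complementary: "k + (2 ^ n - k - 1) + 1 = 2 ^ n"
    and index: "2 ^ n - k - 1 + 1 = 2 ^ n - k"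
    using assms(2) by simp_all
  show ?thesis
    using stern_det_complementary[OF complementary] unfolding stern_det_def index .
qed

end
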